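(* Let $N\ge2$, $\Omega=\mathbb{R}^{N-1}\times(0,\infty)$, $\psi\in L^\infty(\partial\Omega)$. With $v_{\delta,k}$, $w_\delta$, $U$ as in the context, for every $L>0$ and $T>0$, \[\lim_{\delta\to\infty}\sup_{(x,t)\in\Omega_L^c\times(0,T)}|v_{\delta,k}(x,t)-U(x)|=0\ \text{for every fixed }k>0,\qquad \lim_{\delta\to\infty}\sup_{(x,t)\in\Omega_L^c\times(0,T)}|w_\delta(x,t)-U(x)|=0,\] where $\Omega_L^c=\{x\in\overline\Omega:x_N>L\}$.
   Context: $x=(x',x_N)$, $\partial\Omega\cong\mathbb{R}^{N-1}$ with surface measure $d\sigma$. $\Gamma_d(x,t)=(4\pi t)^{-d/2}e^{-|x|^2/(4t)}$, $\partial_\xi\Gamma_1$ is the spatial derivative of $\Gamma_1$. $P(x)=c_Nx_N|x|^{-N}$, $c_N=\pi^{-N/2}\Gamma(N/2)$. $\Phi_{\delta,k}(x,y,t):=-2\int_0^\infty\Gamma_{N-1}(x'-y',\frac k\delta t+\tau)\partial_\xi\Gamma_1(x_N+y_N+\frac t\delta,\tau)d\tau$; $v_{\delta,k}(x,t)=\int_{\partial\Omega}\Phi_{\delta,k}(x,y,t)\psi(y)d\sigma(y)$; $w_\delta(x,t)=\int_{\partial\Omega}P(x'-y',x_N+t/\delta)\psi(y)d\sigma(y)$; $U(x)=\int_{\partial\Omega}P(x'-y',x_N)\psi(y)d\sigma(y)$ (the Poisson integral solving $-\Delta U=0$ in $\Omega$, $U=\psi$ on $\partial\Omega$). *)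

theory Defs
  imports "HOL-Analysis.Analysis"
begin

text \<open>Conventions: R^(N-1) is an arbitrary euclidean space 'a with N = DIM('a) + 1
  (so N >= 2 automatically). A point of Omega-bar is a pair (x', x_N) :: 'a * real,
  the boundary is identified with 'a (y = (y',0)) carrying Lebesgue measure lborel.\<close>

definition heat_kernel :: "nat \<Rightarrow> 'b::real_normed_vector \<Rightarrow> real \<Rightarrow> real" where
  "heat_kernel d z t = (4 * pi * t) powr (- real d / 2) * exp (- (norm z)\<^sup>2 / (4 * t))"

definition dheat1 :: "real \<Rightarrow> real \<Rightarrow> real" where
  "dheat1 \<xi> \<tau> = deriv (\<lambda>s. heat_kernel 1 s \<tau>) \<xi>"

definition Phi :: "real \<Rightarrow> real \<Rightarrow> 'a::euclidean_space \<times> real \<Rightarrow> 'a \<Rightarrow> real \<Rightarrow> real" where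
  "Phi \<delta> k x y' t = - 2 * (LINT \<tau>:{0<..}|lborel.
      heat_kernel DIM('a) (fst x - y') (k / \<delta> * t + \<tau>) * dheat1 (snd x + 0 + t / \<delta>) \<tau>)"

definition v_fun :: "real \<Rightarrow> real \<Rightarrow> ('a::euclidean_space \<Rightarrow> real) \<Rightarrow> 'a \<times> real \<Rightarrow> real \<Rightarrow> real" where
  "v_fun \<delta> k \<psi> x t = (LINT y'|lborel. Phi \<delta> k x y' t * \<psi> y')"

definition c_const :: "nat \<Rightarrow> real" where
  "c_const N = pi powr (- real N / 2) * Gamma (real N / 2)"

definition poisson :: "'a::euclidean_space \<times> real \<Rightarrow> real" where
  "poisson x = c_const (DIM('a) + 1) * snd x * norm x powr (- real (DIM('a) + 1))"

definition w_fun :: "real \<Rightarrow> ('a::euclidean_space \<Rightarrow> real) \<Rightarrow> 'a \<times> real \<Rightarrow> real \<Rightarrow> real" where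
  "w_fun \<delta> \<psi> x t = (LINT y'|lborel. poisson (fst x - y', snd x + t / \<delta>) * \<psi> y')"

definition U_fun :: "('a::euclidean_space \<Rightarrow> real) \<Rightarrow> 'a \<times> real \<Rightarrow> real" where
  "U_fun \<psi> x = (LINT y'|lborel. poisson (fst x - y', snd x) * \<psi> y')"

end

theory Submission
  imports Defs "HOL-Probability.Probability"
begin

text \<open>Let \<open>g\<^sub>\<xi>(\<tau>) := -2 \<partial>\<^sub>\<xi>\<Gamma>\<^sub>1(\<xi>,\<tau>) = (\<xi>/\<tau>) \<Gamma>\<^sub>1(\<xi>,\<tau>)\<close>, a probability density on \<open>(0,\<infinity>)\<close>. Then
  \<open>\<Phi>\<^sub>\<delta>\<^sub>,\<^sub>k(x,y,t) = K\<^sub>s\<^sub>,\<^sub>\<xi>(x' - y')\<close> with \<open>s = k t/\<delta>\<close>, \<open>\<xi> = x\<^sub>N + t/\<delta>\<close> and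
  \<open>K\<^sub>s\<^sub>,\<^sub>\<xi>(z) = \<integral> g\<^sub>\<xi>(\<tau>) \<Gamma>\<^sub>N\<^sub>-\<^sub>1(z, s + \<tau>) d\<tau>\<close>, again a probability density. Subordination gives
  \<open>K\<^sub>0\<^sub>,\<^sub>\<xi>(z) = P(z, \<xi>)\<close>, so \<open>U\<close> and \<open>w\<^sub>\<delta> = v\<^sub>\<delta>\<^sub>,\<^sub>0\<close> are convolutions of \<open>\<psi>\<close> with such kernels too.
  The one-sided comparisons \<open>a g\<^sub>\<xi> \<le> \<xi> g\<^sub>a\<close> (for \<open>a \<le> \<xi>\<close>) and
  \<open>(\<tau>/(s+\<tau>))\<^bsup>(N-1)/2\<^esup> \<Gamma>(z,\<tau>) \<le> \<Gamma>(z,s+\<tau>)\<close> between probability densities yield \<open>L\<^sup>1\<close> bounds, whence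
  \<open>\<parallel>K\<^sub>s\<^sub>,\<^sub>\<xi> - K\<^sub>0\<^sub>,\<^sub>a\<parallel>\<^sub>1 \<le> 2(1 - a/\<xi>) + 2(N-1)s/a\<^sup>2\<close>. With \<open>a = x\<^sub>N > L\<close> and \<open>t < T\<close> this is
  \<open>O(1/\<delta>)\<close> uniformly, and convolving with the bounded \<open>\<psi>\<close> preserves the bound.\<close>

lemma nn_integral_abs_diff_le_of_scaled_le:
  fixes f g :: "'b \<Rightarrow> real"
  assumes [measurable]: "f \<in> borel_measurable M" "g \<in> borel_measurable M"
    and f_nonneg: "\<And>x. 0 \<le> f x" and c: "0 \<le> c" "c \<le> 1" and scaled_le: "\<And>x. c * f x \<le> g x"
    and f_total: "(\<integral>\<^sup>+x. f x \<partial>M) = 1" and g_total: "(\<integral>\<^sup>+x. g x \<partial>M) = 1"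
  shows "(\<integral>\<^sup>+x. ennreal \<bar>g x - f x\<bar> \<partial>M) \<le> ennreal (2 * (1 - c))"
proof -
  have cf_nonneg: "0 \<le> c * f x" for x
    using c f_nonneg by simp
  have "(\<integral>\<^sup>+x. ennreal \<bar>g x - f x\<bar> \<partial>M)
      \<le> (\<integral>\<^sup>+x. ennreal (g x - c * f x) + ennreal ((1 - c) * f x) \<partial>M)"
  proof (intro nn_integral_mono)
    fix x
    have "c * f x \<le> f x"
      using c f_nonneg[of x] mult_right_mono[of c 1 "f x"] by simp
    then have "\<bar>g x - f x\<bar> \<le> (g x - c * f x) + (1 - c) * f x"
      using scaled_le[of x] by (auto simp: abs_le_iff algebra_simps)
    then show "ennreal \<bar>g x - f x\<bar> \<le> ennreal (g x - c * f x) + ennreal ((1 - c) * f x)"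
      using scaled_le[of x] f_nonneg[of x] c
      by (simp add: ennreal_leI flip: ennreal_plus)
  qed
  also have "\<dots> = (\<integral>\<^sup>+x. ennreal (g x - c * f x) \<partial>M) + (\<integral>\<^sup>+x. ennreal ((1 - c) * f x) \<partial>M)"
    by (rule nn_integral_add) auto
  also have "(\<integral>\<^sup>+x. ennreal ((1 - c) * f x) \<partial>M) = ennreal (1 - c)"
    using c f_nonneg f_total by (simp add: ennreal_mult nn_integral_cmult)
  also have "(\<integral>\<^sup>+x. ennreal (g x - c * f x) \<partial>M) = ennreal (1 - c)"
  proof -
    have cf_total: "(\<integral>\<^sup>+x. ennreal (c * f x) \<partial>M) = ennreal c"
      using c f_nonneg f_total by (simp add: ennreal_mult nn_integral_cmult)
    have "(\<integral>\<^sup>+x. ennreal (g x - c * f x) \<partial>M) = (\<integral>\<^sup>+x. ennreal (g x) - ennreal (c * f x) \<partial>M)"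
      using cf_nonneg by (intro nn_integral_cong) (simp add: ennreal_minus)
    also have "\<dots> = (\<integral>\<^sup>+x. ennreal (g x) \<partial>M) - (\<integral>\<^sup>+x. ennreal (c * f x) \<partial>M)"
      using scaled_le cf_total by (intro nn_integral_diff AE_I2 ennreal_leI) auto
    finally show ?thesis
      using c unfolding cf_total g_total by (simp add: ennreal_minus flip: ennreal_1)
  qed
  also have "ennreal (1 - c) + ennreal (1 - c) = ennreal (2 * (1 - c))"
    using c by (simp flip: ennreal_plus)
  finally show ?thesis .
qed

lemma nn_integral_lborel_reflect:
  fixes f :: "'a::euclidean_space \<Rightarrow> ennreal"
  assumes [measurable]: "f \<in> borel_measurable borel"
  shows "(\<integral>\<^sup>+y. f (x - y) \<partial>lborel) = (\<integral>\<^sup>+z. f z \<partial>lborel)"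
proof -
  have "(lborel :: 'a measure) = density (distr lborel borel (\<lambda>y. x + (-1::real) *\<^sub>R y)) (\<lambda>_. \<bar>-1::real\<bar> ^ DIM('a))"
    by (rule lborel_affine) simp
  then have "(\<integral>\<^sup>+z. f z \<partial>lborel) = (\<integral>\<^sup>+z. f z \<partial>density (distr lborel borel (\<lambda>y. x + (-1::real) *\<^sub>R y)) (\<lambda>_. 1))"
    by simp
  also have "\<dots> = (\<integral>\<^sup>+y. f (x - y) \<partial>lborel)"
    by (simp add: nn_integral_density nn_integral_distr)
  finally show ?thesis ..
qed

lemma abs_integral_mult_diff_le:
  fixes f g \<psi> :: "'b \<Rightarrow> real"
  assumes f: "integrable M f" and g: "integrable M g" and [measurable]: "\<psi> \<in> borel_measurable M"
    and bound: "AE y in M. \<bar>\<psi> y\<bar> \<le> B" and B: "B \<ge> 0"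
  shows "ennreal \<bar>(\<integral>y. f y * \<psi> y \<partial>M) - (\<integral>y. g y * \<psi> y \<partial>M)\<bar> \<le> ennreal B * (\<integral>\<^sup>+y. ennreal \<bar>f y - g y\<bar> \<partial>M)"
proof -
  have integrable_mult: "integrable M (\<lambda>y. h y * \<psi> y)" if h: "integrable M h" for h
  proof (rule Bochner_Integration.integrable_bound)
    show "integrable M (\<lambda>y. B * h y)"
      using h by simp
    show "AE y in M. norm (h y * \<psi> y) \<le> norm (B * h y)"
      using bound by eventually_elim (use B in \<open>simp add: abs_mult mult_left_mono mult.commute[of B]\<close>)
  qed (use h in measurable)
  have "ennreal \<bar>(\<integral>y. f y * \<psi> y \<partial>M) - (\<integral>y. g y * \<psi> y \<partial>M)\<bar> = ennreal (norm (\<integral>y. (f y - g y) * \<psi> y \<partial>M))"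
    using integrable_mult[OF f] integrable_mult[OF g] by (simp add: left_diff_distrib)
  also have "\<dots> \<le> (\<integral>\<^sup>+y. norm ((f y - g y) * \<psi> y) \<partial>M)"
    using f g by (intro integral_norm_bound_ennreal integrable_mult) auto
  also have "\<dots> \<le> (\<integral>\<^sup>+y. ennreal B * ennreal \<bar>f y - g y\<bar> \<partial>M)"
  proof (intro nn_integral_mono_AE)
    show "AE y in M. ennreal (norm ((f y - g y) * \<psi> y)) \<le> ennreal B * ennreal \<bar>f y - g y\<bar>"
      using bound by eventually_elim
        (use B in \<open>simp add: abs_mult mult.commute mult_right_mono ennreal_leI flip: ennreal_mult\<close>)
  qed
  also have "\<dots> = ennreal B * (\<integral>\<^sup>+y. ennreal \<bar>f y - g y\<bar> \<partial>M)"
    using f g by (intro nn_integral_cmult) auto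
  finally show ?thesis .
qed

lemma uniform_limit_at_top_of_dist_le:
  fixes f :: "real \<Rightarrow> 'p \<Rightarrow> 'b::metric_space"
  assumes "\<And>\<delta> p. \<delta> > 0 \<Longrightarrow> p \<in> S \<Longrightarrow> dist (f \<delta> p) (g p) \<le> C / \<delta>"
  shows "uniform_limit S f g at_top"
proof (rule uniform_limitI)
  fix e :: real
  assume "e > 0"
  have "((\<lambda>\<delta>. C / \<delta>) \<longlongrightarrow> 0) at_top"
    by (intro tendsto_divide_0[OF tendsto_const] filterlim_at_top_imp_at_infinity filterlim_ident)
  then have "\<forall>\<^sub>F \<delta> in at_top. C / \<delta> < e"
    using \<open>e > 0\<close> by (rule order_tendstoD)
  moreover have "\<forall>\<^sub>F \<delta> in at_top. (\<delta>::real) > 0"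
    by (rule eventually_gt_at_top)
  ultimately show "\<forall>\<^sub>F \<delta> in at_top. \<forall>p\<in>S. dist (f \<delta> p) (g p) < e"
    by eventually_elim (use assms in fastforce)
qed

lemma one_minus_powr_le:
  fixes s \<tau> p :: real
  assumes s: "s \<ge> 0" and t: "\<tau> > 0" and p: "p \<ge> 0"
  shows "1 - (\<tau> / (s + \<tau>)) powr p \<le> p * (s / \<tau>)"
proof -
  have "ln ((s + \<tau>) / \<tau>) \<le> (s + \<tau>) / \<tau> - 1"
    using s t by (intro ln_le_minus_one) auto
  then have "- (s / \<tau>) \<le> ln (\<tau> / (s + \<tau>))"
    using s t by (simp add: ln_div field_simps)
  then have "p * (- (s / \<tau>)) \<le> p * ln (\<tau> / (s + \<tau>))"
    using p by (rule mult_left_mono)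
  then have "1 - p * (s / \<tau>) \<le> 1 + p * ln (\<tau> / (s + \<tau>))"
    by simp
  also have "\<dots> \<le> exp (p * ln (\<tau> / (s + \<tau>)))"
    by (rule exp_ge_add_one_self)
  also have "\<dots> = (\<tau> / (s + \<tau>)) powr p"
    using s t by (simp add: powr_def)
  finally show ?thesis by simp
qed

lemma powr_minus_half: "x > 0 \<Longrightarrow> x powr (-1/2) = 1 / sqrt (x::real)"
  by (simp add: powr_minus_divide powr_half_sqrt)

lemma Gamma_integral_real_greaterThan:
  fixes p :: real
  assumes p: "p > 0"
  shows "((\<lambda>t. t powr (p - 1) / exp t) has_integral Gamma p) {0<..}"
proof -
  have "negligible {x \<in> {0..} - {0<..}. (\<lambda>t::real. t powr (p - 1) / exp t) x \<noteq> 0}"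
    by (rule negligible_subset[of "{0}"]) auto
  moreover have "negligible {x \<in> {0<..} - {0..}. (\<lambda>t::real. t powr (p - 1) / exp t) x \<noteq> 0}"
    by (rule negligible_subset[of "{}"]) auto
  ultimately show ?thesis
    using Gamma_integral_real[OF p] by (intro iffD1[OF has_integral_spike_set_eq[of "{0..}" "{0<..}"]])
qed

lemma image_divide_greaterThan_0:
  fixes r :: real
  assumes r: "r > 0"
  shows "(\<lambda>u. r / u) ` {0<..} = {0<..}"
proof (intro equalityI subsetI)
  fix x :: real assume "x \<in> {0<..}"
  then have "x = r / (r / x)" "r / x \<in> {0<..}" using r by auto
  then show "x \<in> (\<lambda>u. r / u) ` {0<..}" by blast
qed (use r in auto)

text \<open>The substitution \<open>\<tau> = r / u\<close> turns this into Euler's integral for \<open>\<Gamma>(p)\<close>.\<close>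
lemma has_integral_powr_exp_inverse:
  fixes p r :: real
  assumes p: "p > 0" and r: "r > 0"
  shows "((\<lambda>\<tau>. \<tau> powr (-p-1) * exp (-r/\<tau>)) has_integral Gamma p * r powr (-p)) {0<..}"
proof -
  define f where "f = (\<lambda>\<tau>::real. \<tau> powr (-p-1) * exp (-r/\<tau>))"
  have subst: "((\<lambda>u. \<bar>- r / u\<^sup>2\<bar> * f (r / u)) has_integral Gamma p * r powr (-p)) {0<..}"
  proof -
    have "((\<lambda>t. t powr (p - 1) / exp t * r powr (-p)) has_integral Gamma p * r powr (-p)) {0<..}"
      using has_integral_mult_left[OF Gamma_integral_real_greaterThan[OF p]] by simp
    then show ?thesis
    proof (rule has_integral_spike_eq[of "{}", THEN iffD1, rotated 2])
      fix u :: real assume "u \<in> {0<..} - {}"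
      then have u: "u > 0" by simp
      have "u powr (p + 1) * u powr (- p - 1) = 1" using u by (simp flip: powr_add)
      then have "(r/u) powr (-p-1) = r powr (-p-1) * u powr (p+1)"
        using u r by (simp add: powr_divide powr_minus divide_simps)
      then show "\<bar>- r / u\<^sup>2\<bar> * f (r / u) = u powr (p - 1) / exp u * r powr (-p)"
        using u r by (simp add: f_def powr_add powr_diff powr_minus exp_minus field_simps power2_eq_square)
    qed auto
  qed
  have abs_int: "(\<lambda>u. \<bar>- r / u\<^sup>2\<bar> * f (r / u)) absolutely_integrable_on {0<..}"
    using subst r by (intro nonnegative_absolutely_integrable_1) (auto simp: f_def)
  have deriv: "((\<lambda>u. r / u) has_field_derivative (- r / u\<^sup>2)) (at u within {0<..})"
    if "u \<in> {0<..}" for u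
    using that by (auto intro!: derivative_eq_intros simp: power2_eq_square field_simps)
  have inj: "inj_on (\<lambda>u. r / u) {0<..}"
    using r by (auto simp: inj_on_def field_simps)
  have "f absolutely_integrable_on {0<..} \<and> integral {0<..} f = Gamma p * r powr (-p)"
    using has_absolute_integral_change_of_variables_1'[OF _ deriv inj, of f "Gamma p * r powr (-p)"]
      abs_int subst
    unfolding image_divide_greaterThan_0[OF r] by (auto simp: integral_unique)
  then have "(f has_integral Gamma p * r powr (-p)) {0<..}"
    by (metis absolutely_integrable_on_def has_integral_integral)
  then show ?thesis by (simp add: f_def)
qed

lemma nn_integral_powr_exp_inverse:
  fixes p r C :: real
  assumes "p > 0" and "r > 0" and "C \<ge> 0"
  shows "(\<integral>\<^sup>+\<tau>. ennreal (C * (\<tau> powr (-p-1) * exp (-r/\<tau>))) * indicator {0<..} \<tau> \<partial>lborel)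
     = ennreal (C * (Gamma p * r powr (-p)))"
  using assms by (intro nn_integral_has_integral_lebesgue' has_integral_mult_right has_integral_powr_exp_inverse) auto

section \<open>The heat kernel\<close>

lemma heat_kernel_nonneg: "heat_kernel d z \<tau> \<ge> 0"
  by (simp add: heat_kernel_def)

lemma borel_measurable_heat_kernel [measurable]:
  fixes h :: "_ \<Rightarrow> 'a::euclidean_space" and k :: "_ \<Rightarrow> real"
  assumes [measurable]: "h \<in> borel_measurable M" "k \<in> borel_measurable M"
  shows "(\<lambda>p. heat_kernel d (h p) (k p)) \<in> borel_measurable M"
  unfolding heat_kernel_def by measurable

lemma nn_integral_heat_kernel_real:
  fixes \<tau> :: real
  assumes t: "\<tau> > 0"
  shows "(\<integral>\<^sup>+y. ennreal (heat_kernel 1 (y::real) \<tau>) \<partial>lborel) = 1"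
proof -
  have eq: "heat_kernel 1 y \<tau> = normal_density 0 (sqrt (2*\<tau>)) y" for y :: real
  proof -
    have "(4*pi*\<tau>) powr (-1/2) = 1 / sqrt (2 * pi * (sqrt (2*\<tau>))\<^sup>2)"
      using t powr_minus_half[of "4*pi*\<tau>"] by simp
    then show ?thesis using t by (simp add: heat_kernel_def normal_density_def)
  qed
  have "(\<integral>\<^sup>+y. ennreal (normal_density 0 (sqrt (2*\<tau>)) y) \<partial>lborel)
      = ennreal (\<integral>y. normal_density 0 (sqrt (2*\<tau>)) y \<partial>lborel)"
    using t by (intro nn_integral_eq_integral) (auto intro!: integrable_normal_density)
  then show ?thesis
    unfolding eq using t by (simp add: integral_normal_density)
qed

lemma heat_kernel_eq_prod:
  fixes z :: "'a::euclidean_space"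
  assumes t: "\<tau> > 0"
  shows "heat_kernel DIM('a) z \<tau> = (\<Prod>b\<in>Basis. heat_kernel 1 (z \<bullet> b) \<tau>)"
proof -
  have "(norm z)\<^sup>2 = (\<Sum>b\<in>Basis. (z \<bullet> b) * (z \<bullet> b))"
    unfolding power2_norm_eq_inner by (rule euclidean_inner)
  then have norm_sq: "- (norm z)\<^sup>2 / (4 * \<tau>) = (\<Sum>b\<in>Basis. -((z \<bullet> b)\<^sup>2) / (4*\<tau>))"
    by (simp add: power2_eq_square sum_divide_distrib sum_negf)
  have "(\<Prod>b\<in>(Basis::'a set). heat_kernel 1 (z \<bullet> b) \<tau>)
      = ((4*pi*\<tau>) powr (-1/2)) ^ DIM('a) * exp (\<Sum>b\<in>Basis. -((z \<bullet> b)\<^sup>2) / (4*\<tau>))"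
    by (simp add: heat_kernel_def prod.distrib exp_sum)
  also have "((4*pi*\<tau>) powr (-1/2)) ^ DIM('a) = (4*pi*\<tau>) powr (- real DIM('a) / 2)"
    using t by (simp add: powr_power)
  finally show ?thesis
    unfolding heat_kernel_def norm_sq by simp
qed

lemma nn_integral_heat_kernel:
  assumes t: "\<tau> > 0"
  shows "(\<integral>\<^sup>+z. ennreal (heat_kernel DIM('a) (z::'a::euclidean_space) \<tau>) \<partial>lborel) = 1"
proof -
  have "(\<integral>\<^sup>+z. ennreal (heat_kernel DIM('a) (z::'a) \<tau>) \<partial>lborel)
      = (\<integral>\<^sup>+z. (\<Prod>b\<in>Basis. ennreal (heat_kernel 1 ((z::'a) \<bullet> b) \<tau>)) \<partial>lborel)"
    by (intro nn_integral_cong) (simp add: heat_kernel_eq_prod[OF t] prod_ennreal heat_kernel_nonneg)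
  also have "\<dots> = (\<Prod>b\<in>(Basis::'a set). \<integral>\<^sup>+y. ennreal (heat_kernel 1 (y::real) \<tau>) \<partial>lborel)"
    by (rule nn_integral_lborel_prod) auto
  finally show ?thesis using nn_integral_heat_kernel_real[OF t] by simp
qed

lemma heat_kernel_le_origin:
  assumes "s \<ge> 0" and "\<tau> > 0"
  shows "heat_kernel d (z::'a::real_normed_vector) (s + \<tau>) \<le> heat_kernel d (0::'a) \<tau>"
proof -
  have "(4*pi*(s+\<tau>)) powr (- real d / 2) \<le> (4*pi*\<tau>) powr (- real d / 2)"
    using assms by (intro powr_mono2') auto
  moreover have "exp (- (norm z)\<^sup>2 / (4 * (s+\<tau>))) \<le> 1" using assms by auto
  ultimately show ?thesis
    unfolding heat_kernel_def using mult_mono[of _ _ _ 1] by fastforce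
qed

lemma heat_kernel_time_shift_ge:
  assumes s: "s \<ge> 0" and t: "\<tau> > 0"
  shows "(\<tau> / (s + \<tau>)) powr (real d / 2) * heat_kernel d z \<tau> \<le> heat_kernel d z (s + \<tau>)"
proof -
  have "4*pi*(s + \<tau>) = (4*pi*\<tau>) * ((s + \<tau>) / \<tau>)"
    using t by simp
  then have "(4*pi*(s + \<tau>)) powr (- (real d / 2))
      = (4*pi*\<tau>) powr (- (real d / 2)) * ((s + \<tau>) / \<tau>) powr (- (real d / 2))"
    by (simp only: powr_mult)
  also have "((s + \<tau>) / \<tau>) powr (- (real d / 2)) = (\<tau> / (s + \<tau>)) powr (real d / 2)"
    using s t by (simp add: powr_minus powr_divide)
  finally have factor: "(4*pi*(s + \<tau>)) powr (- real d / 2)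
      = (\<tau> / (s + \<tau>)) powr (real d / 2) * (4*pi*\<tau>) powr (- real d / 2)"
    by simp
  have "exp (- (norm z)\<^sup>2 / (4 * \<tau>)) \<le> exp (- (norm z)\<^sup>2 / (4 * (s + \<tau>)))"
    using s t by (auto simp: divide_simps intro!: mult_left_mono)
  then show ?thesis
    unfolding heat_kernel_def factor by (simp add: mult.assoc mult_left_mono)
qed

lemma nn_integral_heat_kernel_time_shift_le:
  assumes s: "s \<ge> 0" and t: "\<tau> > 0"
  shows "(\<integral>\<^sup>+z. ennreal \<bar>heat_kernel DIM('a) (z::'a::euclidean_space) (s + \<tau>) - heat_kernel DIM('a) z \<tau>\<bar> \<partial>lborel)
     \<le> ennreal (real DIM('a) * s / \<tau>)"
proof -
  define c where "c = (\<tau> / (s + \<tau>)) powr (real DIM('a) / 2)"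
  have c: "0 \<le> c" "c \<le> 1"
    using s t powr_mono2[of "real DIM('a) / 2" "\<tau> / (s + \<tau>)" 1] by (auto simp: c_def)
  have "(\<integral>\<^sup>+z. ennreal \<bar>heat_kernel DIM('a) (z::'a) (s + \<tau>) - heat_kernel DIM('a) z \<tau>\<bar> \<partial>lborel)
      \<le> ennreal (2 * (1 - c))"
    using s t c
    by (intro nn_integral_abs_diff_le_of_scaled_le)
      (auto simp: c_def heat_kernel_nonneg heat_kernel_time_shift_ge nn_integral_heat_kernel)
  also have "\<dots> \<le> ennreal (real DIM('a) * s / \<tau>)"
    using one_minus_powr_le[OF s t, of "real DIM('a) / 2"] t by (intro ennreal_leI) (simp add: c_def field_simps)
  finally show ?thesis .
qed

section \<open>The first-passage time density\<close>

text \<open>The density \<open>g\<^sub>\<xi>\<close> of the first time a Brownian motion with generator \<open>\<Delta>\<close> reaches level \<open>\<xi>\<close>.\<close>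
definition levy_density :: "real \<Rightarrow> real \<Rightarrow> real" where
  "levy_density \<xi> \<tau> = \<xi> / \<tau> * heat_kernel 1 \<xi> \<tau>"

lemma dheat1_eq_levy_density:
  assumes t: "\<tau> > 0"
  shows "dheat1 \<xi> \<tau> = - levy_density \<xi> \<tau> / 2"
proof -
  have "((\<lambda>s. heat_kernel 1 s \<tau>) has_real_derivative
      (4*pi*\<tau>) powr (-1/2) * (exp (- \<xi>\<^sup>2 / (4*\<tau>)) * (- (2 * \<xi>) / (4*\<tau>)))) (at \<xi>)"
    using t unfolding heat_kernel_def
    by (auto intro!: derivative_eq_intros simp: power2_eq_square field_simps)
  then show ?thesis
    using t unfolding dheat1_def by (simp add: DERIV_imp_deriv levy_density_def heat_kernel_def field_simps)
qed

lemma levy_density_nonneg: "\<xi> \<ge> 0 \<Longrightarrow> \<tau> \<ge> 0 \<Longrightarrow> levy_density \<xi> \<tau> \<ge> 0"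
  by (simp add: levy_density_def heat_kernel_nonneg)

lemma borel_measurable_levy_density [measurable]:
  fixes f g :: "_ \<Rightarrow> real"
  assumes [measurable]: "f \<in> borel_measurable M" "g \<in> borel_measurable M"
  shows "(\<lambda>p. levy_density (f p) (g p)) \<in> borel_measurable M"
  unfolding levy_density_def heat_kernel_def by measurable

lemma levy_density_le_scaled:
  assumes "\<tau> > 0" and "a > 0" and "a \<le> \<xi>"
  shows "a * levy_density \<xi> \<tau> \<le> \<xi> * levy_density a \<tau>"
proof -
  have "exp (- \<xi>\<^sup>2 / (4 * \<tau>)) \<le> exp (- a\<^sup>2 / (4 * \<tau>))"
    using assms by (auto simp: divide_simps intro!: power_mono)
  then show ?thesis
    using assms by (simp add: levy_density_def heat_kernel_def field_simps mult_left_mono)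
qed

lemma levy_density_powr_form:
  assumes t: "\<tau> > 0"
  shows "levy_density \<xi> \<tau> = \<xi> * (4*pi) powr (-1/2) * (\<tau> powr (-(1/2)-1) * exp (-(\<xi>\<^sup>2/4)/\<tau>))"
proof -
  have "\<tau> powr (-1/2) = \<tau> * \<tau> powr (-(1/2)-1)"
    using t powr_add[of \<tau> 1 "-(1/2)-1"] by simp
  then show ?thesis
    using t by (simp add: levy_density_def heat_kernel_def powr_mult field_simps)
qed

lemma nn_integral_levy_density:
  assumes xi: "\<xi> > 0"
  shows "(\<integral>\<^sup>+\<tau>. ennreal (levy_density \<xi> \<tau>) * indicator {0<..} \<tau> \<partial>lborel) = 1"
proof -
  have "(\<integral>\<^sup>+\<tau>. ennreal (levy_density \<xi> \<tau>) * indicator {0<..} \<tau> \<partial>lborel) =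
     (\<integral>\<^sup>+\<tau>. ennreal ((\<xi> * (4*pi) powr (-1/2)) * (\<tau> powr (-(1/2)-1) * exp (-(\<xi>\<^sup>2/4)/\<tau>)))
        * indicator {0<..} \<tau> \<partial>lborel)"
    by (intro nn_integral_cong) (auto simp: levy_density_powr_form split: split_indicator)
  also have "\<dots> = ennreal ((\<xi> * (4*pi) powr (-1/2)) * (Gamma (1/2) * (\<xi>\<^sup>2/4) powr (-(1/2))))"
    using xi by (intro nn_integral_powr_exp_inverse) auto
  also have "(\<xi> * (4*pi) powr (-1/2)) * (Gamma (1/2) * (\<xi>\<^sup>2/4) powr (-(1/2))) = 1"
    using xi by (simp add: powr_minus_divide powr_half_sqrt real_sqrt_mult real_sqrt_divide Gamma_one_half_real)
  finally show ?thesis by simp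
qed

lemma nn_integral_levy_density_div:
  assumes xi: "\<xi> > 0"
  shows "(\<integral>\<^sup>+\<tau>. ennreal (levy_density \<xi> \<tau> / \<tau>) * indicator {0<..} \<tau> \<partial>lborel) = ennreal (2 / \<xi>\<^sup>2)"
proof -
  have "(\<integral>\<^sup>+\<tau>. ennreal (levy_density \<xi> \<tau> / \<tau>) * indicator {0<..} \<tau> \<partial>lborel) =
     (\<integral>\<^sup>+\<tau>. ennreal ((\<xi> * (4*pi) powr (-1/2)) * (\<tau> powr (-(3/2)-1) * exp (-(\<xi>\<^sup>2/4)/\<tau>)))
        * indicator {0<..} \<tau> \<partial>lborel)"
  proof (intro nn_integral_cong)
    fix \<tau> :: real
    have "\<tau> powr (-(1/2)-1) = \<tau> * \<tau> powr (-(3/2)-1)" if "\<tau> > 0"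
      using that powr_add[of \<tau> 1 "-(3/2)-1"] by simp
    then show "ennreal (levy_density \<xi> \<tau> / \<tau>) * indicator {0<..} \<tau> =
        ennreal ((\<xi> * (4*pi) powr (-1/2)) * (\<tau> powr (-(3/2)-1) * exp (-(\<xi>\<^sup>2/4)/\<tau>))) * indicator {0<..} \<tau>"
      by (auto simp: levy_density_powr_form mult.assoc split: split_indicator)
  qed
  also have "\<dots> = ennreal ((\<xi> * (4*pi) powr (-1/2)) * (Gamma (3/2) * (\<xi>\<^sup>2/4) powr (-(3/2))))"
    using xi by (intro nn_integral_powr_exp_inverse) auto
  also have "(\<xi> * (4*pi) powr (-1/2)) * (Gamma (3/2) * (\<xi>\<^sup>2/4) powr (-(3/2))) = 2 / \<xi>\<^sup>2"
  proof -
    have "(\<xi>\<^sup>2/4) powr (-(3/2)) = (\<xi>\<^sup>2/4) powr (-(1/2) + -1)"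
      by simp
    also have "\<dots> = (\<xi>\<^sup>2/4) powr (-(1/2)) * (\<xi>\<^sup>2/4) powr (-1)"
      by (rule powr_add)
    also have "\<dots> = (2 / \<xi>) * (4 / \<xi>\<^sup>2)"
      using xi by (simp add: powr_minus_divide powr_half_sqrt real_sqrt_divide)
    finally have xi_factor: "(\<xi>\<^sup>2/4) powr (-(3/2)) = (2 / \<xi>) * (4 / \<xi>\<^sup>2)" .
    have Gamma_factor: "Gamma (3/2::real) = sqrt pi / 2"
      using Gamma_plus1[of "1/2::real"] nonpos_Ints_nonpos[of "1/2::real"] by (auto simp: Gamma_one_half_real)
    have pi_factor: "(4*pi) powr (-1/2) = 1 / (2 * sqrt pi)"
      using powr_minus_half[of "4*pi"] by (simp add: real_sqrt_mult)
    show ?thesis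
      unfolding xi_factor Gamma_factor pi_factor using xi by (simp add: field_simps power2_eq_square)
  qed
  finally show ?thesis by simp
qed

lemma nn_integral_levy_density_diff_le:
  assumes a: "a > 0" and a_le: "a \<le> \<xi>"
  shows "(\<integral>\<^sup>+\<tau>. ennreal \<bar>levy_density \<xi> \<tau> - levy_density a \<tau>\<bar> * indicator {0<..} \<tau> \<partial>lborel)
     \<le> ennreal (2 * (1 - a / \<xi>))"
proof -
  have total: "(\<integral>\<^sup>+\<tau>. ennreal (levy_density b \<tau> * indicator {0<..} \<tau>) \<partial>lborel) = 1" if "b > 0" for b
  proof -
    have "(\<integral>\<^sup>+\<tau>. ennreal (levy_density b \<tau> * indicator {0<..} \<tau>) \<partial>lborel)
        = (\<integral>\<^sup>+\<tau>. ennreal (levy_density b \<tau>) * indicator {0<..} \<tau> \<partial>lborel)"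
      by (intro nn_integral_cong) (simp split: split_indicator)
    then show ?thesis
      using nn_integral_levy_density[OF that] by simp
  qed
  have "(\<integral>\<^sup>+\<tau>. ennreal \<bar>levy_density \<xi> \<tau> - levy_density a \<tau>\<bar> * indicator {0<..} \<tau> \<partial>lborel)
      = (\<integral>\<^sup>+\<tau>. ennreal \<bar>levy_density a \<tau> * indicator {0<..} \<tau> - levy_density \<xi> \<tau> * indicator {0<..} \<tau>\<bar> \<partial>lborel)"
    by (intro nn_integral_cong) (simp add: abs_minus_commute split: split_indicator)
  also have "\<dots> \<le> ennreal (2 * (1 - a / \<xi>))"
  proof (rule nn_integral_abs_diff_le_of_scaled_le)
    fix \<tau> :: real
    show "a / \<xi> * (levy_density \<xi> \<tau> * indicator {0<..} \<tau>) \<le> levy_density a \<tau> * indicator {0<..} \<tau>"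
      using levy_density_le_scaled[of \<tau> a \<xi>] a a_le by (auto simp: field_simps split: split_indicator)
  qed (use a a_le total in \<open>auto simp: levy_density_nonneg split: split_indicator\<close>)
  finally show ?thesis .
qed

lemma levy_density_mult_heat_kernel:
  fixes z :: "'a::euclidean_space"
  assumes t: "\<tau> > 0"
  shows "levy_density \<xi> \<tau> * heat_kernel DIM('a) z \<tau> = \<xi> * (4*pi) powr (-((real DIM('a) + 1) / 2))
    * (\<tau> powr (-((real DIM('a) + 1) / 2) - 1) * exp (-((\<xi>\<^sup>2 + (norm z)\<^sup>2) / 4) / \<tau>))"
proof -
  define p where "p = (real DIM('a) + 1) / 2"
  have "-1/2 + - real DIM('a)/2 = -p" "(-(1/2)-1) + - real DIM('a)/2 = -p-1"
    by (simp_all add: p_def field_simps)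
  then have pi_factor: "(4*pi) powr (-1/2) * (4*pi) powr (- real DIM('a)/2) = (4*pi) powr (-p)"
    and t_factor: "\<tau> powr (-(1/2)-1) * \<tau> powr (- real DIM('a)/2) = \<tau> powr (-p-1)"
    by (simp_all only: flip: powr_add)
  have exp_factor:
    "exp (-(\<xi>\<^sup>2/4)/\<tau>) * exp (- (norm z)\<^sup>2 / (4*\<tau>)) = exp (-((\<xi>\<^sup>2 + (norm z)\<^sup>2) / 4) / \<tau>)"
    by (simp flip: exp_add) (simp add: field_simps add_divide_distrib)
  have "(4*pi*\<tau>) powr (- real DIM('a)/2) = (4*pi) powr (- real DIM('a)/2) * \<tau> powr (- real DIM('a)/2)"
    by (rule powr_mult)
  then have "levy_density \<xi> \<tau> * heat_kernel DIM('a) z \<tau>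
    = \<xi> * ((4*pi) powr (-1/2) * (4*pi) powr (- real DIM('a)/2))
        * ((\<tau> powr (-(1/2)-1) * \<tau> powr (- real DIM('a)/2))
        * (exp (-(\<xi>\<^sup>2/4)/\<tau>) * exp (- (norm z)\<^sup>2 / (4*\<tau>))))"
    unfolding levy_density_powr_form[OF t] heat_kernel_def by (simp only: mult_ac)
  then show ?thesis
    unfolding pi_factor t_factor exp_factor p_def .
qed

lemma poisson_eq_Gamma:
  fixes z :: "'a::euclidean_space"
  defines "p \<equiv> (real DIM('a) + 1) / 2"
  shows "poisson (z, \<xi>) = \<xi> * (4*pi) powr (-p) * (Gamma p * ((\<xi>\<^sup>2 + (norm z)\<^sup>2) / 4) powr (-p))"
proof -
  have "(4*pi) powr (-p) * ((\<xi>\<^sup>2 + (norm z)\<^sup>2) / 4) powr (-p) = pi powr (-p) * ((norm z)\<^sup>2 + \<xi>\<^sup>2) powr (-p)"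
    by (simp add: powr_mult[symmetric] add.commute)
  moreover have "norm (z, \<xi>) powr (- real (DIM('a) + 1)) = ((norm z)\<^sup>2 + \<xi>\<^sup>2) powr (-p)"
  proof -
    have "norm (z, \<xi>) = ((norm z)\<^sup>2 + \<xi>\<^sup>2) powr (1/2)"
      by (simp add: norm_Pair powr_half_sqrt)
    moreover have "1/2 * (- real (DIM('a) + 1)) = -p"
      by (simp add: p_def field_simps)
    ultimately show ?thesis
      by (simp only: powr_powr)
  qed
  moreover have "c_const (DIM('a) + 1) = pi powr (-p) * Gamma p"
  proof -
    have "- real (DIM('a) + 1) / 2 = -p" "real (DIM('a) + 1) / 2 = p"
      by (simp_all add: p_def field_simps)
    then show ?thesis
      unfolding c_const_def by (simp only:)
  qed
  ultimately show ?thesis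
    by (simp add: poisson_def)
qed

text \<open>Subordination: averaging the heat kernel over the first-passage time of level \<open>\<xi>\<close>
  gives the Poisson kernel.\<close>
lemma nn_integral_levy_density_heat_kernel:
  fixes z :: "'a::euclidean_space"
  assumes xi: "\<xi> > 0"
  shows "(\<integral>\<^sup>+\<tau>. ennreal (levy_density \<xi> \<tau> * heat_kernel DIM('a) z \<tau>) * indicator {0<..} \<tau> \<partial>lborel)
     = ennreal (poisson (z, \<xi>))"
proof -
  define p where "p = (real DIM('a) + 1) / 2"
  define r where "r = (\<xi>\<^sup>2 + (norm z)\<^sup>2) / 4"
  have p: "p > 0" and r: "r > 0"
    using xi by (auto simp: p_def r_def add_pos_nonneg)
  have "(\<integral>\<^sup>+\<tau>. ennreal (levy_density \<xi> \<tau> * heat_kernel DIM('a) z \<tau>) * indicator {0<..} \<tau> \<partial>lborel) =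
     (\<integral>\<^sup>+\<tau>. ennreal ((\<xi> * (4*pi) powr (-p)) * (\<tau> powr (-p-1) * exp (-r/\<tau>))) * indicator {0<..} \<tau> \<partial>lborel)"
    by (intro nn_integral_cong) (auto simp: levy_density_mult_heat_kernel p_def r_def split: split_indicator)
  also have "\<dots> = ennreal ((\<xi> * (4*pi) powr (-p)) * (Gamma p * r powr (-p)))"
    using p r xi by (intro nn_integral_powr_exp_inverse) auto
  also have "\<dots> = ennreal (poisson (z, \<xi>))"
    by (simp add: poisson_eq_Gamma p_def r_def)
  finally show ?thesis .
qed

section \<open>The subordinated heat kernel\<close>

definition subordinated_kernel :: "real \<Rightarrow> real \<Rightarrow> 'a::euclidean_space \<Rightarrow> real" where
  "subordinated_kernel s \<xi> z =
     (LINT \<tau>:{0<..}|lborel. levy_density \<xi> \<tau> * heat_kernel DIM('a) z (s + \<tau>))"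

lemma Phi_eq_subordinated_kernel:
  "Phi \<delta> k x y' t = subordinated_kernel (k / \<delta> * t) (snd x + t / \<delta>) (fst x - y' :: 'a::euclidean_space)"
proof -
  have "Phi \<delta> k x y' t = (LINT \<tau>:{0<..}|lborel.
      - 2 * (heat_kernel DIM('a) (fst x - y') (k / \<delta> * t + \<tau>) * dheat1 (snd x + 0 + t / \<delta>) \<tau>))"
    unfolding Phi_def by (rule set_integral_mult_right[symmetric])
  also have "\<dots> = subordinated_kernel (k / \<delta> * t) (snd x + t / \<delta>) (fst x - y')"
    unfolding subordinated_kernel_def
    by (rule set_lebesgue_integral_cong) (auto simp: dheat1_eq_levy_density)
  finally show ?thesis .
qed

lemma set_integrable_subordinated_kernel:
  fixes z :: "'a::euclidean_space"
  assumes s: "s \<ge> 0" and xi: "\<xi> > 0"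
  shows "set_integrable lborel {0<..} (\<lambda>\<tau>. levy_density \<xi> \<tau> * heat_kernel DIM('a) z (s + \<tau>))"
proof -
  have "integrable lborel (\<lambda>\<tau>. levy_density \<xi> \<tau> * heat_kernel DIM('a) (0::'a) \<tau> * indicator {0<..} \<tau>)"
  proof (rule integrableI_nn_integral_finite)
    show "(\<integral>\<^sup>+\<tau>. ennreal (levy_density \<xi> \<tau> * heat_kernel DIM('a) (0::'a) \<tau> * indicator {0<..} \<tau>) \<partial>lborel)
        = ennreal (poisson ((0::'a), \<xi>))"
      unfolding nn_integral_levy_density_heat_kernel[OF xi, symmetric]
      by (intro nn_integral_cong) (simp split: split_indicator)
  qed (use xi in \<open>auto intro!: AE_I2 mult_nonneg_nonneg levy_density_nonneg heat_kernel_nonneg split: split_indicator\<close>)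
  then show ?thesis
    unfolding set_integrable_def
  proof (rule Bochner_Integration.integrable_bound)
    show "AE \<tau> in lborel. norm (indicator {0<..} \<tau> *\<^sub>R (levy_density \<xi> \<tau> * heat_kernel DIM('a) z (s + \<tau>)))
        \<le> norm (levy_density \<xi> \<tau> * heat_kernel DIM('a) (0::'a) \<tau> * indicator {0<..} \<tau>)"
      using s xi heat_kernel_le_origin[OF s, of _ "DIM('a)" z]
      by (intro AE_I2) (auto simp: levy_density_nonneg heat_kernel_nonneg mult_left_mono split: split_indicator)
  qed measurable
qed

lemma ennreal_subordinated_kernel:
  fixes z :: "'a::euclidean_space"
  assumes s: "s \<ge> 0" and xi: "\<xi> > 0"
  shows "ennreal (subordinated_kernel s \<xi> z) =
    (\<integral>\<^sup>+\<tau>. ennreal (levy_density \<xi> \<tau> * heat_kernel DIM('a) z (s + \<tau>)) * indicator {0<..} \<tau> \<partial>lborel)"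
proof -
  have "(\<integral>\<^sup>+\<tau>. ennreal (indicator {0<..} \<tau> *\<^sub>R (levy_density \<xi> \<tau> * heat_kernel DIM('a) z (s + \<tau>))) \<partial>lborel)
     = ennreal (\<integral>\<tau>. indicator {0<..} \<tau> *\<^sub>R (levy_density \<xi> \<tau> * heat_kernel DIM('a) z (s + \<tau>)) \<partial>lborel)"
    using set_integrable_subordinated_kernel[OF s xi, of z] s xi
    by (intro nn_integral_eq_integral)
      (auto simp: set_integrable_def intro!: AE_I2 mult_nonneg_nonneg levy_density_nonneg heat_kernel_nonneg split: split_indicator)
  then show ?thesis
    unfolding subordinated_kernel_def set_lebesgue_integral_def by (simp add: indicator_mult_ennreal mult.commute)
qed

lemma subordinated_kernel_nonneg: "\<xi> \<ge> 0 \<Longrightarrow> subordinated_kernel s \<xi> z \<ge> 0"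
  unfolding subordinated_kernel_def set_lebesgue_integral_def
  by (intro Bochner_Integration.integral_nonneg)
    (auto intro!: mult_nonneg_nonneg levy_density_nonneg heat_kernel_nonneg split: split_indicator)

lemma subordinated_kernel_zero_eq_poisson:
  assumes xi: "\<xi> > 0"
  shows "subordinated_kernel 0 \<xi> z = poisson (z, \<xi>)"
proof -
  have "ennreal (subordinated_kernel 0 \<xi> z) = ennreal (poisson (z, \<xi>))"
    using ennreal_subordinated_kernel[of 0 \<xi> z] nn_integral_levy_density_heat_kernel[OF xi, of z] xi by simp
  moreover have "poisson (z, \<xi>) \<ge> 0"
    using xi by (simp add: poisson_def c_const_def Gamma_real_pos)
  ultimately show ?thesis
    using subordinated_kernel_nonneg[of \<xi> 0 z] xi by simp
qed

lemma borel_measurable_subordinated_kernel [measurable]: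
  "subordinated_kernel s \<xi> \<in> borel_measurable (borel :: 'a::euclidean_space measure)"
  unfolding subordinated_kernel_def[abs_def] set_lebesgue_integral_def by measurable

lemma nn_integral_subordinated_kernel:
  assumes s: "s \<ge> 0" and xi: "\<xi> > 0"
  shows "(\<integral>\<^sup>+z. ennreal (subordinated_kernel s \<xi> (z::'a::euclidean_space)) \<partial>lborel) = 1"
proof -
  have "(\<integral>\<^sup>+z. ennreal (subordinated_kernel s \<xi> (z::'a)) \<partial>lborel) =
    (\<integral>\<^sup>+z. (\<integral>\<^sup>+\<tau>. ennreal (levy_density \<xi> \<tau> * heat_kernel DIM('a) (z::'a) (s + \<tau>))
        * indicator {0<..} \<tau> \<partial>lborel) \<partial>lborel)"
    by (intro nn_integral_cong) (rule ennreal_subordinated_kernel[OF s xi])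
  also have "\<dots> = (\<integral>\<^sup>+\<tau>. (\<integral>\<^sup>+z. ennreal (levy_density \<xi> \<tau> * heat_kernel DIM('a) (z::'a) (s + \<tau>))
        * indicator {0<..} \<tau> \<partial>lborel) \<partial>lborel)"
    by (rule pair_sigma_finite.Fubini'[symmetric]) (unfold_locales, measurable)
  also have "\<dots> = (\<integral>\<^sup>+\<tau>. ennreal (levy_density \<xi> \<tau>) * indicator {0<..} \<tau> \<partial>lborel)"
  proof (intro nn_integral_cong)
    fix \<tau> :: real
    show "(\<integral>\<^sup>+z. ennreal (levy_density \<xi> \<tau> * heat_kernel DIM('a) (z::'a) (s + \<tau>)) * indicator {0<..} \<tau> \<partial>lborel)
       = ennreal (levy_density \<xi> \<tau>) * indicator {0<..} \<tau>"
    proof (cases "\<tau> > 0")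
      case True
      have "(\<integral>\<^sup>+z. ennreal (levy_density \<xi> \<tau> * heat_kernel DIM('a) (z::'a) (s + \<tau>)) \<partial>lborel)
         = ennreal (levy_density \<xi> \<tau>) * (\<integral>\<^sup>+z. ennreal (heat_kernel DIM('a) (z::'a) (s + \<tau>)) \<partial>lborel)"
        using True xi
        by (simp add: ennreal_mult levy_density_nonneg heat_kernel_nonneg nn_integral_cmult)
      also have "\<dots> = ennreal (levy_density \<xi> \<tau>)"
        using nn_integral_heat_kernel[of "s + \<tau>", where 'a='a] s True by simp
      finally show ?thesis using True by simp
    qed simp
  qed
  also have "\<dots> = 1" by (rule nn_integral_levy_density[OF xi])
  finally show ?thesis .
qed

lemma integrable_subordinated_kernel_reflect:
  assumes s: "s \<ge> 0" and xi: "\<xi> > 0"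
  shows "integrable lborel (\<lambda>y. subordinated_kernel s \<xi> (x - y :: 'a::euclidean_space))"
proof (rule integrableI_nn_integral_finite)
  show "(\<integral>\<^sup>+y. ennreal (subordinated_kernel s \<xi> (x - y)) \<partial>lborel) = ennreal 1"
    using nn_integral_lborel_reflect[of "\<lambda>z. ennreal (subordinated_kernel s \<xi> z)" x]
      nn_integral_subordinated_kernel[OF s xi, where 'a='a] by simp
qed (use xi in \<open>auto intro!: AE_I2 subordinated_kernel_nonneg\<close>)

section \<open>\<open>L\<^sup>1\<close> distance of subordinated kernels\<close>

lemma subordinated_kernel_diff_le:
  fixes z :: "'a::euclidean_space"
  assumes s: "s \<ge> 0" and a: "a > 0" and a_le: "a \<le> \<xi>"
  shows "ennreal \<bar>subordinated_kernel s \<xi> z - subordinated_kernel 0 a z\<bar>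
    \<le> (\<integral>\<^sup>+\<tau>. ennreal (\<bar>levy_density \<xi> \<tau> - levy_density a \<tau>\<bar> * heat_kernel DIM('a) z (s + \<tau>)
          + levy_density a \<tau> * \<bar>heat_kernel DIM('a) z (s + \<tau>) - heat_kernel DIM('a) z \<tau>\<bar>)
        * indicator {0<..} \<tau> \<partial>lborel)"
proof -
  let ?A = "\<lambda>\<tau>. levy_density \<xi> \<tau> * heat_kernel DIM('a) z (s + \<tau>)"
  let ?B = "\<lambda>\<tau>. levy_density a \<tau> * heat_kernel DIM('a) z (0 + \<tau>)"
  have int_A: "set_integrable lborel {0<..} ?A"
    using a a_le s by (intro set_integrable_subordinated_kernel) auto
  have int_B: "set_integrable lborel {0<..} ?B"
    using a by (intro set_integrable_subordinated_kernel) auto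
  have diff: "subordinated_kernel s \<xi> z - subordinated_kernel 0 a z
      = (\<integral>\<tau>. indicator {0<..} \<tau> *\<^sub>R (?A \<tau> - ?B \<tau>) \<partial>lborel)"
    using set_integral_diff(2)[OF int_A int_B]
    by (simp add: subordinated_kernel_def set_lebesgue_integral_def)
  have "integrable lborel (\<lambda>\<tau>. indicator {0<..} \<tau> *\<^sub>R (?A \<tau> - ?B \<tau>))"
    using set_integral_diff(1)[OF int_A int_B] by (simp add: set_integrable_def)
  then have "ennreal \<bar>subordinated_kernel s \<xi> z - subordinated_kernel 0 a z\<bar>
      \<le> (\<integral>\<^sup>+\<tau>. norm (indicator {0<..} \<tau> *\<^sub>R (?A \<tau> - ?B \<tau>)) \<partial>lborel)"
    unfolding diff real_norm_def[symmetric] by (rule integral_norm_bound_ennreal)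
  also have "\<dots> \<le> (\<integral>\<^sup>+\<tau>. ennreal (\<bar>levy_density \<xi> \<tau> - levy_density a \<tau>\<bar> * heat_kernel DIM('a) z (s + \<tau>)
          + levy_density a \<tau> * \<bar>heat_kernel DIM('a) z (s + \<tau>) - heat_kernel DIM('a) z \<tau>\<bar>)
        * indicator {0<..} \<tau> \<partial>lborel)"
  proof (intro nn_integral_mono)
    fix \<tau> :: real
    have "\<bar>?A \<tau> - ?B \<tau>\<bar> = \<bar>(levy_density \<xi> \<tau> - levy_density a \<tau>) * heat_kernel DIM('a) z (s + \<tau>)
        + levy_density a \<tau> * (heat_kernel DIM('a) z (s + \<tau>) - heat_kernel DIM('a) z \<tau>)\<bar>"
      by (simp add: algebra_simps)
    also have "\<dots> \<le> \<bar>levy_density \<xi> \<tau> - levy_density a \<tau>\<bar> * heat_kernel DIM('a) z (s + \<tau>)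
        + \<bar>levy_density a \<tau>\<bar> * \<bar>heat_kernel DIM('a) z (s + \<tau>) - heat_kernel DIM('a) z \<tau>\<bar>"
      by (rule order_trans[OF abs_triangle_ineq]) (simp add: abs_mult heat_kernel_nonneg)
    finally show "ennreal (norm (indicator {0<..} \<tau> *\<^sub>R (?A \<tau> - ?B \<tau>)))
        \<le> ennreal (\<bar>levy_density \<xi> \<tau> - levy_density a \<tau>\<bar> * heat_kernel DIM('a) z (s + \<tau>)
          + levy_density a \<tau> * \<bar>heat_kernel DIM('a) z (s + \<tau>) - heat_kernel DIM('a) z \<tau>\<bar>)
        * indicator {0<..} \<tau>"
      using a by (auto simp: levy_density_nonneg ennreal_leI split: split_indicator)
  qed
  finally show ?thesis .
qed

lemma nn_integral_subordination_error_le: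
  assumes s: "s \<ge> 0" and t: "\<tau> > 0" and a: "a > 0"
  shows "(\<integral>\<^sup>+z. ennreal (\<bar>levy_density \<xi> \<tau> - levy_density a \<tau>\<bar> * heat_kernel DIM('a) (z::'a::euclidean_space) (s + \<tau>)
          + levy_density a \<tau> * \<bar>heat_kernel DIM('a) z (s + \<tau>) - heat_kernel DIM('a) z \<tau>\<bar>) \<partial>lborel)
    \<le> ennreal \<bar>levy_density \<xi> \<tau> - levy_density a \<tau>\<bar> + ennreal (real DIM('a) * s) * ennreal (levy_density a \<tau> / \<tau>)"
proof -
  define X where "X = \<bar>levy_density \<xi> \<tau> - levy_density a \<tau>\<bar>"
  define Y where "Y = levy_density a \<tau>"
  have X: "X \<ge> 0" and Y: "Y \<ge> 0"
    using t a by (auto simp: X_def Y_def levy_density_nonneg)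
  have "(\<integral>\<^sup>+z. ennreal (X * heat_kernel DIM('a) (z::'a) (s + \<tau>)
          + Y * \<bar>heat_kernel DIM('a) z (s + \<tau>) - heat_kernel DIM('a) z \<tau>\<bar>) \<partial>lborel)
      = (\<integral>\<^sup>+z. ennreal X * ennreal (heat_kernel DIM('a) (z::'a) (s + \<tau>))
          + ennreal Y * ennreal \<bar>heat_kernel DIM('a) z (s + \<tau>) - heat_kernel DIM('a) z \<tau>\<bar> \<partial>lborel)"
    using X Y by (intro nn_integral_cong) (simp add: ennreal_plus ennreal_mult heat_kernel_nonneg)
  also have "\<dots> = ennreal X * (\<integral>\<^sup>+z. ennreal (heat_kernel DIM('a) (z::'a) (s + \<tau>)) \<partial>lborel)
        + ennreal Y * (\<integral>\<^sup>+z. ennreal \<bar>heat_kernel DIM('a) (z::'a) (s + \<tau>) - heat_kernel DIM('a) z \<tau>\<bar> \<partial>lborel)"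
    by (subst nn_integral_add) (auto simp: nn_integral_cmult)
  also have "\<dots> \<le> ennreal X + ennreal Y * ennreal (real DIM('a) * s / \<tau>)"
    using s t by (simp add: nn_integral_heat_kernel nn_integral_heat_kernel_time_shift_le mult_left_mono)
  also have "ennreal Y * ennreal (real DIM('a) * s / \<tau>) = ennreal (real DIM('a) * s) * ennreal (Y / \<tau>)"
    using Y s t by (simp flip: ennreal_mult)
  finally show ?thesis
    unfolding X_def Y_def .
qed

lemma nn_integral_subordinated_kernel_diff_le:
  assumes s: "s \<ge> 0" and a: "a > 0" and a_le: "a \<le> \<xi>"
  shows "(\<integral>\<^sup>+z. ennreal \<bar>subordinated_kernel s \<xi> z - subordinated_kernel 0 a (z::'a::euclidean_space)\<bar> \<partial>lborel)
     \<le> ennreal (2 * (1 - a / \<xi>) + real DIM('a) * s * (2 / a\<^sup>2))"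
proof -
  define H where "H = (\<lambda>(z::'a) \<tau>. \<bar>levy_density \<xi> \<tau> - levy_density a \<tau>\<bar> * heat_kernel DIM('a) z (s + \<tau>)
      + levy_density a \<tau> * \<bar>heat_kernel DIM('a) z (s + \<tau>) - heat_kernel DIM('a) z \<tau>\<bar>)"
  have [measurable]: "(\<lambda>(z, \<tau>). H z \<tau>) \<in> borel_measurable (lborel \<Otimes>\<^sub>M lborel)"
    unfolding H_def by measurable
  have "(\<integral>\<^sup>+z. ennreal \<bar>subordinated_kernel s \<xi> z - subordinated_kernel 0 a (z::'a)\<bar> \<partial>lborel)
      \<le> (\<integral>\<^sup>+z. (\<integral>\<^sup>+\<tau>. ennreal (H z \<tau>) * indicator {0<..} \<tau> \<partial>lborel) \<partial>lborel)"
    unfolding H_def using subordinated_kernel_diff_le[OF s a a_le] by (intro nn_integral_mono)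
  also have "\<dots> = (\<integral>\<^sup>+\<tau>. (\<integral>\<^sup>+z. ennreal (H z \<tau>) * indicator {0<..} \<tau> \<partial>lborel) \<partial>lborel)"
    by (rule pair_sigma_finite.Fubini'[symmetric]) (unfold_locales, measurable)
  also have "\<dots> \<le> (\<integral>\<^sup>+\<tau>. ennreal \<bar>levy_density \<xi> \<tau> - levy_density a \<tau>\<bar> * indicator {0<..} \<tau>
        + ennreal (real DIM('a) * s) * (ennreal (levy_density a \<tau> / \<tau>) * indicator {0<..} \<tau>) \<partial>lborel)"
    using nn_integral_subordination_error_le[OF s _ a, of _ \<xi>, where 'a='a]
    by (intro nn_integral_mono) (auto simp: H_def distrib_right split: split_indicator)
  also have "\<dots> = (\<integral>\<^sup>+\<tau>. ennreal \<bar>levy_density \<xi> \<tau> - levy_density a \<tau>\<bar> * indicator {0<..} \<tau> \<partial>lborel)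
        + ennreal (real DIM('a) * s) * (\<integral>\<^sup>+\<tau>. ennreal (levy_density a \<tau> / \<tau>) * indicator {0<..} \<tau> \<partial>lborel)"
    by (subst nn_integral_add) (auto simp: nn_integral_cmult)
  also have "\<dots> \<le> ennreal (2 * (1 - a / \<xi>)) + ennreal (real DIM('a) * s) * ennreal (2 / a\<^sup>2)"
    unfolding nn_integral_levy_density_div[OF a] by (intro add_mono nn_integral_levy_density_diff_le[OF a a_le]) simp
  also have "\<dots> = ennreal (2 * (1 - a / \<xi>) + real DIM('a) * s * (2 / a\<^sup>2))"
    using s a a_le by (simp add: field_simps flip: ennreal_plus ennreal_mult)
  finally show ?thesis .
qed

lemma convolution_subordinated_kernel_diff_le:
  fixes \<psi> :: "'a::euclidean_space \<Rightarrow> real"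
  assumes \<psi>: "\<psi> \<in> borel_measurable lborel" and bound: "AE y in lborel. \<bar>\<psi> y\<bar> \<le> B" and B: "B \<ge> 0"
    and s: "s \<ge> 0" and a: "a > 0" and a_le: "a \<le> \<xi>"
  shows "\<bar>(LINT y|lborel. subordinated_kernel s \<xi> (x - y) * \<psi> y)
      - (LINT y|lborel. subordinated_kernel 0 a (x - y) * \<psi> y)\<bar>
    \<le> B * (2 * (1 - a / \<xi>) + real DIM('a) * s * (2 / a\<^sup>2))"
proof -
  have "a / \<xi> \<le> 1"
    using a a_le by simp
  then have R: "0 \<le> 2 * (1 - a / \<xi>) + real DIM('a) * s * (2 / a\<^sup>2)"
    using s by (intro add_nonneg_nonneg) auto
  have "ennreal \<bar>(LINT y|lborel. subordinated_kernel s \<xi> (x - y) * \<psi> y)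
      - (LINT y|lborel. subordinated_kernel 0 a (x - y) * \<psi> y)\<bar>
    \<le> ennreal B * (\<integral>\<^sup>+y. ennreal \<bar>subordinated_kernel s \<xi> (x - y) - subordinated_kernel 0 a (x - y)\<bar> \<partial>lborel)"
    using s a a_le by (intro abs_integral_mult_diff_le integrable_subordinated_kernel_reflect \<psi> bound B) auto
  also have "(\<integral>\<^sup>+y. ennreal \<bar>subordinated_kernel s \<xi> (x - y) - subordinated_kernel 0 a (x - y)\<bar> \<partial>lborel)
      = (\<integral>\<^sup>+z. ennreal \<bar>subordinated_kernel s \<xi> z - subordinated_kernel 0 a (z::'a)\<bar> \<partial>lborel)"
    by (rule nn_integral_lborel_reflect[of "\<lambda>z. ennreal \<bar>subordinated_kernel s \<xi> z - subordinated_kernel 0 a z\<bar>"])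
      measurable
  also have "ennreal B * \<dots> \<le> ennreal B * ennreal (2 * (1 - a / \<xi>) + real DIM('a) * s * (2 / a\<^sup>2))"
    by (intro mult_left_mono nn_integral_subordinated_kernel_diff_le[OF s a a_le]) simp
  also have "\<dots> = ennreal (B * (2 * (1 - a / \<xi>) + real DIM('a) * s * (2 / a\<^sup>2)))"
    using B R by (simp add: ennreal_mult)
  finally show ?thesis
    using ennreal_le_iff[OF mult_nonneg_nonneg[OF B R]] by blast
qed

section \<open>Uniform convergence\<close>

lemma subordination_error_bound:
  fixes L T \<delta> k t a D :: real
  assumes L: "L > 0" and a: "a > L" and t: "0 < t" "t < T" and \<delta>: "\<delta> > 0" and k: "k \<ge> 0" and D: "D \<ge> 0"
  shows "2 * (1 - a / (a + t / \<delta>)) + D * (k / \<delta> * t) * (2 / a\<^sup>2) \<le> (2 * T / L + 2 * D * k * T / L\<^sup>2) / \<delta>"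
proof -
  have c: "a + t / \<delta> > 0" using L a t \<delta> by (simp add: add_pos_pos)
  have "1 - a / (a + t / \<delta>) = (t / \<delta>) / (a + t / \<delta>)"
    using c by (simp add: diff_divide_eq_iff)
  also have "\<dots> \<le> (t / \<delta>) / a"
    using L a t \<delta> c by (intro divide_left_mono) (auto intro: mult_pos_pos)
  also have "\<dots> \<le> (T / \<delta>) / L"
    using L a t \<delta> by (intro frac_le divide_right_mono) auto
  finally have first: "1 - a / (a + t / \<delta>) \<le> T / (\<delta> * L)" by simp
  have "2 / a\<^sup>2 \<le> 2 / L\<^sup>2"
    using L a by (intro divide_left_mono power_mono) auto
  moreover have "k / \<delta> * t \<le> k / \<delta> * T"
    using k \<delta> t by (intro mult_left_mono) auto
  ultimately have "(k / \<delta> * t) * (2 / a\<^sup>2) \<le> (k / \<delta> * T) * (2 / L\<^sup>2)"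
    using k \<delta> t by (intro mult_mono) auto
  then have second: "D * (k / \<delta> * t) * (2 / a\<^sup>2) \<le> D * ((k / \<delta> * T) * (2 / L\<^sup>2))"
    using D by (metis mult.assoc mult_left_mono)
  have "2 * (1 - a / (a + t / \<delta>)) + D * (k / \<delta> * t) * (2 / a\<^sup>2)
      \<le> 2 * (T / (\<delta> * L)) + D * ((k / \<delta> * T) * (2 / L\<^sup>2))"
    using first second by (intro add_mono) auto
  also have "\<dots> = (2 * T / L + 2 * D * k * T / L\<^sup>2) / \<delta>"
    using \<delta> L by (simp add: field_simps)
  finally show ?thesis .
qed

lemma abs_v_fun_diff_U_fun_le:
  fixes \<psi> :: "'a::euclidean_space \<Rightarrow> real"
  assumes \<psi>: "\<psi> \<in> borel_measurable lborel" and bound: "AE y in lborel. \<bar>\<psi> y\<bar> \<le> B" and B: "B \<ge> 0"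
    and L: "L > 0" and x: "snd x > L" and t: "0 < t" "t < T" and \<delta>: "\<delta> > 0" and k: "k \<ge> 0"
  shows "\<bar>v_fun \<delta> k \<psi> x t - U_fun \<psi> x\<bar> \<le> B * (2 * T / L + 2 * real DIM('a) * k * T / L\<^sup>2) / \<delta>"
proof -
  have "v_fun \<delta> k \<psi> x t = (LINT y|lborel. subordinated_kernel (k / \<delta> * t) (snd x + t / \<delta>) (fst x - y) * \<psi> y)"
    by (simp add: v_fun_def Phi_eq_subordinated_kernel)
  moreover have "U_fun \<psi> x = (LINT y|lborel. subordinated_kernel 0 (snd x) (fst x - y) * \<psi> y)"
    using L x by (simp add: U_fun_def subordinated_kernel_zero_eq_poisson)
  ultimately have "\<bar>v_fun \<delta> k \<psi> x t - U_fun \<psi> x\<bar>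
      \<le> B * (2 * (1 - snd x / (snd x + t / \<delta>)) + real DIM('a) * (k / \<delta> * t) * (2 / (snd x)\<^sup>2))"
    using L x t \<delta> k by (simp only:) (rule convolution_subordinated_kernel_diff_le[OF \<psi> bound B]; simp)
  also have "\<dots> \<le> B * ((2 * T / L + 2 * real DIM('a) * k * T / L\<^sup>2) / \<delta>)"
    using L x t \<delta> k B by (intro mult_left_mono subordination_error_bound) auto
  finally show ?thesis by simp
qed

lemma uniform_limit_v_fun:
  fixes \<psi> :: "'a::euclidean_space \<Rightarrow> real"
  assumes \<psi>: "\<psi> \<in> borel_measurable lborel" and bound: "AE y in lborel. \<bar>\<psi> y\<bar> \<le> B" and B: "B \<ge> 0"
    and L: "L > 0" and k: "k \<ge> 0"
  shows "uniform_limit {(x, t). snd x > L \<and> 0 < t \<and> t < T}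
    (\<lambda>\<delta> (x, t). v_fun \<delta> k \<psi> x t) (\<lambda>(x, t). U_fun \<psi> x) at_top"
proof (rule uniform_limit_at_top_of_dist_le)
  fix \<delta> :: real and p :: "('a \<times> real) \<times> real"
  assume "\<delta> > 0" "p \<in> {(x, t). snd x > L \<and> 0 < t \<and> t < T}"
  then show "dist ((\<lambda>(x, t). v_fun \<delta> k \<psi> x t) p) ((\<lambda>(x, t). U_fun \<psi> x) p)
      \<le> B * (2 * T / L + 2 * real DIM('a) * k * T / L\<^sup>2) / \<delta>"
    using abs_v_fun_diff_U_fun_le[OF \<psi> bound B L _ _ _ _ k] by (auto simp: dist_real_def)
qed

lemma w_fun_eq_v_fun_zero:
  assumes "snd x + t / \<delta> > 0"
  shows "w_fun \<delta> \<psi> x t = v_fun \<delta> 0 \<psi> x t"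
  using assms by (simp add: w_fun_def v_fun_def Phi_eq_subordinated_kernel subordinated_kernel_zero_eq_poisson)

theorem theorem4p3:
  fixes \<psi> :: "'a::euclidean_space \<Rightarrow> real" and L T :: real
  assumes "\<psi> \<in> borel_measurable lborel"
    and "\<exists>B. AE y in lborel. \<bar>\<psi> y\<bar> \<le> B"
    and "L > 0" and "T > 0"
  shows "(\<forall>k>0. uniform_limit {(x, t). snd x > L \<and> 0 < t \<and> t < T}
            (\<lambda>\<delta> (x, t). v_fun \<delta> k \<psi> x t) (\<lambda>(x, t). U_fun \<psi> x) at_top)
       \<and> uniform_limit {(x, t). snd x > L \<and> 0 < t \<and> t < T}
            (\<lambda>\<delta> (x, t). w_fun \<delta> \<psi> x t) (\<lambda>(x, t). U_fun \<psi> x) at_top"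
    (is "_ \<and> ?w_limit")
proof -
  obtain B0 where "AE y in lborel. \<bar>\<psi> y\<bar> \<le> B0"
    using assms(2) by blast
  then have bound: "AE y in lborel. \<bar>\<psi> y\<bar> \<le> max B0 0"
    by eventually_elim simp
  note v_limit = uniform_limit_v_fun[OF assms(1) bound max.cobounded2 assms(3)]
  have "\<forall>\<^sub>F \<delta> in at_top. \<forall>p\<in>{(x, t). snd x > L \<and> 0 < t \<and> t < T}.
      (\<lambda>(x, t). w_fun \<delta> \<psi> x t) p = (\<lambda>(x, t). v_fun \<delta> 0 \<psi> x t) p"
    using eventually_gt_at_top[of 0]
    by eventually_elim (use assms(3) in \<open>auto intro!: w_fun_eq_v_fun_zero add_pos_pos\<close>)
  then have ?w_limit
    using v_limit[of 0] by (subst uniform_limit_cong) auto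
  with v_limit show ?thesis
    by simp
qed

end
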